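(* Let $q,r,\nu$ be positive integers with $q<\nu\le r$. Then the equation $\mathcal{M}^0(z)C=I_q$ (for all $z$) admits a solution $C\in\mathbb{R}^{\nu r\times q}$ not depending on $z$, and the set of such constant solutions is an affine space of dimension $(\nu-q)rq$.
   Context: $u(z)=(1,\dots,z^{q-1})^\top$, $w(z)=(1,\dots,z^{r-1})$, $M(z)=u(z)w(z)\in\mathbb{C}^{q\times r}$, and $\mathcal{M}^0(z)=(M(z),M'(z),\dots,M^{(\nu-1)}(z))\in\mathbb{C}^{q\times\nu r}$, derivatives taken in $z$. *)

theory Defs
  imports "HOL-Analysis.Analysis" "HOL-Library.Function_Algebras"
begin

text \<open>M(z) = u(z) w(z), a q x r matrix (indices from 0): entry (i,j) is z^i * z^j.\<close>
definition Mmat :: "complex \<Rightarrow> nat \<Rightarrow> nat \<Rightarrow> complex" where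
  "Mmat z i j = z ^ i * z ^ j"

text \<open>M^0(z) = (M(z), M'(z), ..., M^(nu-1)(z)), a q x (nu r) matrix; column a = k*r + j
  (k < nu, j < r) is column j of the k-th derivative of M.\<close>
definition M0 :: "nat \<Rightarrow> complex \<Rightarrow> nat \<Rightarrow> nat \<Rightarrow> complex" where
  "M0 r z i a = (deriv ^^ (a div r)) (\<lambda>\<zeta>. Mmat \<zeta> i (a mod r)) z"

text \<open>Real nu r x q matrices are represented as functions nat => nat => real vanishing
  outside the index range; this is the scalar multiplication making them a real vector space.\<close>
definition mscale :: "real \<Rightarrow> (nat \<Rightarrow> nat \<Rightarrow> real) \<Rightarrow> (nat \<Rightarrow> nat \<Rightarrow> real)" where
  "mscale c C = (\<lambda>a b. c * C a b)"

end

theory Submission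
  imports Defs "HOL-Computational_Algebra.Polynomial"
begin

text \<open>Split a column c of C into \<nu> blocks of length r and read the k-th block as the coefficient
  vector of a polynomial g_k of degree < r. The columns of M^0(z) are derivatives of monomials, so the
  i-th entry of M^0(z) c is the sum over k of (z^i g_k)^(k), which by the Leibniz rule is the sum over
  l \<le> i of (z^i)^(l) a_l, where a_l is the sum over k of (k choose l) g_k^(k-l). Prescribing these
  entries for i < q is a triangular system with diagonal (z^i)^(i) = i!, so it determines
  a_0, ..., a_(q-1) uniquely, with deg a_l \<le> l < r. As a_l is g_l plus terms in the g_k with k > l,
  these in turn determine g_0, ..., g_(q-1) from arbitrary g_q, ..., g_(\<nu>-1). Hence the entries of C
  in rows q r, ..., \<nu> r - 1 are free coordinates on the set of solutions, a translate of a space of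
  dimension (\<nu> - q) r q.\<close>

section \<open>Leibniz rule and a triangular system\<close>

lemma higher_pderiv_mult:
  fixes p q :: "'a::idom poly"
  shows "(pderiv ^^ n) (p * q) =
    (\<Sum>i\<le>n. smult (of_nat (n choose i)) ((pderiv ^^ i) p * (pderiv ^^ (n - i)) q))"
proof (induction n)
  case (Suc n)
  have pderiv_sum: "pderiv (sum f A) = (\<Sum>x\<in>A. pderiv (f x))" for f :: "nat \<Rightarrow> 'a poly" and A
    using higher_pderiv_sum[of 1 f A] by simp
  let ?t = "\<lambda>c i j. smult (of_nat c) ((pderiv ^^ i) p * (pderiv ^^ j) q)"
  have "(pderiv ^^ Suc n) (p * q) =
      (\<Sum>i\<le>n. ?t (n choose i) (Suc i) (n - i)) + (\<Sum>i\<le>Suc n. ?t (n choose i) i (Suc n - i))"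
    by (simp add: Suc pderiv_sum pderiv_smult pderiv_mult sum.distrib smult_add_right Suc_diff_le
        sum.atMost_Suc binomial_eq_0 algebra_simps)
  also have "\<dots> = (\<Sum>i\<le>Suc n. ?t (Suc n choose i) i (Suc n - i))"
    by (simp only: sum.atMost_Suc_shift) (simp add: binomial_Suc_Suc smult_add_left sum.distrib add_ac)
  finally show ?case .
qed simp

lemma higher_pderiv_monom_one_eq_0: "i < l \<Longrightarrow> (pderiv ^^ l) (monom (1::'a::idom) i) = 0"
  by (intro poly_eqI) (auto simp: coeff_higher_pderiv coeff_monom)

lemma higher_pderiv_monom_one_self: "(pderiv ^^ i) (monom (1::'a::{idom,semiring_char_0}) i) = [:fact i:]"
  by (intro poly_eqI) (auto simp: coeff_higher_pderiv coeff_monom pochhammer_fact coeff_pCons split: nat.splits)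

definition leibniz_term :: "nat \<Rightarrow> (nat \<Rightarrow> 'a::idom poly) \<Rightarrow> nat \<Rightarrow> 'a poly" where
  "leibniz_term \<nu> G l = (\<Sum>k<\<nu>. smult (of_nat (k choose l)) ((pderiv ^^ (k - l)) (G k)))"

lemma leibniz_term_cong:
  "(\<And>k. k < \<nu> \<Longrightarrow> G k = G' k) \<Longrightarrow> leibniz_term \<nu> G l = leibniz_term \<nu> G' l"
  unfolding leibniz_term_def by (intro sum.cong) auto

lemma sum_higher_pderiv_monom_mult:
  assumes "i < \<nu>"
  shows "(\<Sum>k<\<nu>. (pderiv ^^ k) (monom 1 i * G k)) =
    (\<Sum>l\<le>i. (pderiv ^^ l) (monom 1 i) * leibniz_term \<nu> G l)"
proof -
  let ?P = "\<lambda>l. (pderiv ^^ l) (monom (1::'a) i)"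
  have "(\<Sum>k<\<nu>. (pderiv ^^ k) (monom 1 i * G k)) =
      (\<Sum>k<\<nu>. \<Sum>l<\<nu>. smult (of_nat (k choose l)) (?P l * (pderiv ^^ (k - l)) (G k)))"
    unfolding higher_pderiv_mult
    by (intro sum.cong refl sum.mono_neutral_left) (auto simp: binomial_eq_0)
  also have "\<dots> = (\<Sum>l<\<nu>. ?P l * leibniz_term \<nu> G l)"
    unfolding leibniz_term_def
    by (subst sum.swap) (simp add: sum_distrib_left mult_smult_right)
  also have "\<dots> = (\<Sum>l\<le>i. ?P l * leibniz_term \<nu> G l)"
    using assms by (intro sum.mono_neutral_right) (auto simp: higher_pderiv_monom_one_eq_0)
  finally show ?thesis .
qed

lemma triangular_pderiv_system:
  fixes \<delta> :: "nat \<Rightarrow> 'a::field_char_0"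
  shows "\<exists>A. (\<forall>l<q. degree (A l) \<le> l) \<and>
    (\<forall>a. (\<forall>i<q. (\<Sum>l\<le>i. (pderiv ^^ l) (monom 1 i) * a l) = [:\<delta> i:]) \<longleftrightarrow> (\<forall>l<q. a l = A l))"
proof (induction q)
  case (Suc q)
  then obtain A where deg_A: "\<forall>l<q. degree (A l) \<le> l"
    and A: "\<And>a. (\<forall>i<q. (\<Sum>l\<le>i. (pderiv ^^ l) (monom 1 i) * a l) = [:\<delta> i:]) \<longleftrightarrow> (\<forall>l<q. a l = A l)"
    by blast
  define S where "S = (\<Sum>l<q. (pderiv ^^ l) (monom (1::'a) q) * A l)"
  define A' where "A' = A(q := smult (1 / fact q) ([:\<delta> q:] - S))"
  have "degree S \<le> q"
    unfolding S_def
  proof (intro degree_sum_le)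
    fix l assume "l \<in> {..<q}"
    then have "l < q" "degree (A l) \<le> l" "degree ((pderiv ^^ l) (monom (1::'a) q)) \<le> q - l"
      using deg_A by (auto simp: degree_higher_pderiv degree_monom_eq)
    then show "degree ((pderiv ^^ l) (monom (1::'a) q) * A l) \<le> q"
      using degree_mult_le[of "(pderiv ^^ l) (monom (1::'a) q)" "A l"] by linarith
  qed simp
  then have "\<forall>l<Suc q. degree (A' l) \<le> l"
    using deg_A degree_diff_le[of "[:\<delta> q:]" q S] by (auto simp: A'_def less_Suc_eq)
  moreover have "(\<forall>i<Suc q. (\<Sum>l\<le>i. (pderiv ^^ l) (monom 1 i) * a l) = [:\<delta> i:]) \<longleftrightarrow>
      (\<forall>l<Suc q. a l = A' l)" for a
  proof -
    have "(\<Sum>l\<le>q. (pderiv ^^ l) (monom 1 q) * a l) = S + smult (fact q) (a q)"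
      if "\<forall>l<q. a l = A l"
      using that by (simp add: lessThan_Suc_atMost[symmetric] S_def higher_pderiv_monom_one_self)
    moreover have "S + smult (fact q) (a q) = [:\<delta> q:] \<longleftrightarrow> a q = A' q"
    proof
      assume "S + smult (fact q) (a q) = [:\<delta> q:]"
      then have scaled: "smult (fact q) (a q) = [:\<delta> q:] - S"
        by (simp add: algebra_simps)
      show "a q = A' q"
        by (simp add: A'_def flip: scaled)
    qed (simp add: A'_def)
    ultimately show ?thesis
      using A[of a] by (auto simp: less_Suc_eq A'_def)
  qed
  ultimately show ?case by blast
qed simp

section \<open>Back substitution\<close>

text \<open>The tail only involves G k for k > l, so prescribed Leibniz terms are attained by solving
  for G l from the top index downwards.\<close>
definition leibniz_tail :: "nat \<Rightarrow> (nat \<Rightarrow> 'a::idom poly) \<Rightarrow> nat \<Rightarrow> 'a poly" where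
  "leibniz_tail \<nu> G l = (\<Sum>k\<in>{l<..<\<nu>}. smult (of_nat (k choose l)) ((pderiv ^^ (k - l)) (G k)))"

lemma leibniz_term_eq_tail: "l < \<nu> \<Longrightarrow> leibniz_term \<nu> G l = G l + leibniz_tail \<nu> G l"
proof -
  assume "l < \<nu>"
  then have split: "{..<\<nu>} = {..<l} \<union> insert l {l<..<\<nu>}"
    by auto
  show ?thesis
    unfolding leibniz_term_def leibniz_tail_def split
    by (subst sum.union_disjoint) (auto simp: binomial_eq_0 intro!: sum.neutral)
qed

lemma leibniz_tail_cong:
  "(\<And>k. l < k \<Longrightarrow> k < \<nu> \<Longrightarrow> G k = G' k) \<Longrightarrow> leibniz_tail \<nu> G l = leibniz_tail \<nu> G' l"
  unfolding leibniz_tail_def by (intro sum.cong) auto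

lemma degree_leibniz_tail_less:
  fixes G :: "nat \<Rightarrow> 'a::{idom,semiring_char_0} poly"
  assumes "\<And>k. degree (G k) < r"
  shows "degree (leibniz_tail \<nu> G l) < r"
proof -
  have "degree (leibniz_tail \<nu> G l) \<le> r - 1"
    unfolding leibniz_tail_def
  proof (intro degree_sum_le)
    fix k
    have "degree (smult (of_nat (k choose l)) ((pderiv ^^ (k - l)) (G k))) \<le> degree (G k)"
      by (metis degree_higher_pderiv degree_smult_le diff_le_self order_trans)
    then show "degree (smult (of_nat (k choose l)) ((pderiv ^^ (k - l)) (G k))) \<le> r - 1"
      using assms[of k] by linarith
  qed simp
  moreover have "0 < r"
    using assms[of 0] by linarith
  ultimately show ?thesis
    by linarith
qed

lemma leibniz_terms_surj:
  fixes G :: "nat \<Rightarrow> 'a::{idom,semiring_char_0} poly"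
  assumes "m \<le> \<nu>" "\<And>l. l < m \<Longrightarrow> degree (T l) < r" "\<And>k. degree (G k) < r"
  shows "\<exists>G'. (\<forall>k\<ge>m. G' k = G k) \<and> (\<forall>k. degree (G' k) < r) \<and> (\<forall>l<m. leibniz_term \<nu> G' l = T l)"
  using assms
proof (induction m arbitrary: G)
  case (Suc m)
  define G1 where "G1 = G(m := T m - leibniz_tail \<nu> G m)"
  have "degree (G1 k) < r" for k
  proof (cases "k = m")
    case True
    have "degree (leibniz_tail \<nu> G m) < r"
      by (rule degree_leibniz_tail_less) (rule Suc.prems(3))
    then show ?thesis
      using True Suc.prems(2)[of m] degree_diff_le_max[of "T m" "leibniz_tail \<nu> G m"]
      by (simp add: G1_def)
  qed (simp add: G1_def Suc.prems(3))
  then obtain G' where G': "\<forall>k\<ge>m. G' k = G1 k" "\<forall>k. degree (G' k) < r"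
    "\<forall>l<m. leibniz_term \<nu> G' l = T l"
    using Suc.IH[of G1] Suc.prems by auto
  have "leibniz_term \<nu> G' m = G' m + leibniz_tail \<nu> G' m"
    using Suc.prems(1) by (simp add: leibniz_term_eq_tail)
  also have "leibniz_tail \<nu> G' m = leibniz_tail \<nu> G m"
    by (rule leibniz_tail_cong) (simp add: G'(1) G1_def)
  finally have "leibniz_term \<nu> G' m = T m"
    using G'(1) by (simp add: G1_def)
  with G' show ?case
    by (intro exI[of _ G']) (auto simp: G1_def less_Suc_eq)
qed auto

lemma leibniz_terms_inj:
  assumes "q \<le> \<nu>" "\<And>l. l < q \<Longrightarrow> leibniz_term \<nu> G l = leibniz_term \<nu> G' l"
    "\<And>k. q \<le> k \<Longrightarrow> k < \<nu> \<Longrightarrow> G k = G' k" "l < q"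
  shows "G l = G' l"
  using assms(4)
proof (induction "q - l" arbitrary: l rule: less_induct)
  case less
  have "leibniz_tail \<nu> G l = leibniz_tail \<nu> G' l"
  proof (rule leibniz_tail_cong)
    fix k assume "l < k" "k < \<nu>"
    then show "G k = G' k"
      using less.hyps assms(3) by (cases "k < q") auto
  qed
  moreover have "l < \<nu>"
    using assms(1) less.prems by simp
  ultimately show ?case
    using assms(2)[OF less.prems] by (simp add: leibniz_term_eq_tail)
qed

section \<open>One column of the equation\<close>

lemma mult_add_less_mult:
  fixes k m j r :: nat
  assumes "k < m" "j < r"
  shows "k * r + j < m * r"
proof -
  have "k * r + j < Suc k * r"
    using assms(2) by simp
  also have "\<dots> \<le> m * r"
    using assms(1) by (intro mult_le_mono1) simp
  finally show ?thesis .
qed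

lemma sum_lessThan_mult_blocks:
  fixes f :: "nat \<Rightarrow> 'a::comm_monoid_add"
  shows "(\<Sum>a<m * r. f a) = (\<Sum>k<m. \<Sum>j<r. f (k * r + j))"
proof -
  have "sum f {k * r..<k * r + r} = (\<Sum>j<r. f (k * r + j))" for k
    using sum.atLeastLessThan_shift_bounds[of f 0 "k * r" r]
    by (simp add: lessThan_atLeast0 comp_def add.commute)
  then show ?thesis
    by (simp flip: sum.nat_group)
qed

definition block_poly :: "nat \<Rightarrow> (nat \<Rightarrow> 'a::comm_monoid_add) \<Rightarrow> nat \<Rightarrow> 'a poly" where
  "block_poly r c k = (\<Sum>j<r. monom (c (k * r + j)) j)"

lemma coeff_block_poly: "coeff (block_poly r c k) n = (if n < r then c (k * r + n) else 0)"
  unfolding block_poly_def coeff_sum coeff_monom by simp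

lemma degree_block_poly_less:
  assumes "0 < r"
  shows "degree (block_poly r c k) < r"
proof -
  have "degree (block_poly r c k) \<le> r - 1"
    by (rule degree_le) (auto simp: coeff_block_poly)
  with assms show ?thesis
    by linarith
qed

lemma map_poly_of_real_pderiv:
  "map_poly of_real (pderiv p) = pderiv (map_poly (of_real :: real \<Rightarrow> 'a::{real_algebra_1,idom}) p)"
  by (intro poly_eqI) (simp add: coeff_pderiv coeff_map_poly)

lemma map_poly_of_real_higher_pderiv:
  "map_poly of_real ((pderiv ^^ k) p) = (pderiv ^^ k) (map_poly (of_real :: real \<Rightarrow> 'a::{real_algebra_1,idom}) p)"
  by (induction k) (simp_all add: map_poly_of_real_pderiv)

lemma map_poly_of_real_sum:
  "map_poly (of_real :: real \<Rightarrow> 'a::real_algebra_1) (sum f A) = (\<Sum>x\<in>A. map_poly of_real (f x))"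
  by (intro poly_eqI) (simp add: coeff_map_poly coeff_sum)

lemma higher_deriv_poly: "(deriv ^^ k) (poly p) = poly ((pderiv ^^ k) (p :: complex poly))"
  by (induction k) (simp_all add: DERIV_imp_deriv[OF poly_DERIV])

lemma M0_block:
  assumes "j < r"
  shows "M0 r z i (k * r + j) = poly ((pderiv ^^ k) (monom 1 (i + j))) z"
proof -
  have "(\<lambda>\<zeta>. Mmat \<zeta> i j) = poly (monom 1 (i + j))"
    by (simp add: Mmat_def poly_monom power_add fun_eq_iff)
  then show ?thesis
    using assms by (simp add: M0_def higher_deriv_poly)
qed

lemma sum_M0_eq_poly:
  "(\<Sum>a<\<nu> * r. M0 r z i a * of_real (c a)) =
    poly (map_poly of_real (\<Sum>k<\<nu>. (pderiv ^^ k) (monom 1 i * block_poly r c k))) z"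
proof -
  have "monom 1 i * block_poly r c k = (\<Sum>j<r. smult (c (k * r + j)) (monom 1 (i + j)))" for k
    by (simp add: block_poly_def sum_distrib_left mult_monom smult_monom)
  then have "poly (map_poly of_real (\<Sum>k<\<nu>. (pderiv ^^ k) (monom 1 i * block_poly r c k))) z =
      (\<Sum>k<\<nu>. \<Sum>j<r. M0 r z i (k * r + j) * of_real (c (k * r + j)))"
    by (simp add: map_poly_of_real_sum map_poly_of_real_higher_pderiv higher_pderiv_sum
        higher_pderiv_smult map_poly_smult map_poly_monom poly_sum M0_block mult.commute)
  also have "\<dots> = (\<Sum>a<\<nu> * r. M0 r z i a * of_real (c a))"
    by (simp add: sum_lessThan_mult_blocks)
  finally show ?thesis ..
qed

lemma poly_map_poly_of_real_eq_const_iff: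
  "(\<forall>z. poly (map_poly of_real p) z = (of_real d :: complex)) \<longleftrightarrow> p = [:d:]"
proof
  assume "\<forall>z. poly (map_poly of_real p) z = (of_real d :: complex)"
  then have "map_poly of_real p = map_poly (of_real :: real \<Rightarrow> complex) [:d:]"
    by (auto simp: map_poly_pCons simp flip: poly_eq_poly_eq_iff)
  then show "p = [:d:]"
    by (auto simp: poly_eq_iff coeff_map_poly)
qed (simp add: map_poly_pCons)

definition solves_column :: "nat \<Rightarrow> nat \<Rightarrow> nat \<Rightarrow> (nat \<Rightarrow> real) \<Rightarrow> (nat \<Rightarrow> real) \<Rightarrow> bool" where
  "solves_column \<nu> r q c t \<longleftrightarrow>
    (\<forall>z. \<forall>i<q. (\<Sum>a<\<nu> * r. M0 r z i a * of_real (c a)) = of_real (t i))"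

lemma solves_column_lincomb:
  assumes "solves_column \<nu> r q c t" "solves_column \<nu> r q c' t'"
  shows "solves_column \<nu> r q (\<lambda>a. x * c a + y * c' a) (\<lambda>i. x * t i + y * t' i)"
  unfolding solves_column_def
proof (intro allI impI)
  fix z i assume "i < q"
  have "(\<Sum>a<\<nu> * r. M0 r z i a * of_real (x * c a + y * c' a)) =
      of_real x * (\<Sum>a<\<nu> * r. M0 r z i a * of_real (c a)) +
      of_real y * (\<Sum>a<\<nu> * r. M0 r z i a * of_real (c' a))"
  proof -
    have "M0 r z i a * of_real (x * c a + y * c' a) =
        of_real x * (M0 r z i a * of_real (c a)) + of_real y * (M0 r z i a * of_real (c' a))" for a
      by (simp add: algebra_simps)
    then show ?thesis
      by (simp only: sum.distrib sum_distrib_left)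
  qed
  with assms \<open>i < q\<close> show "(\<Sum>a<\<nu> * r. M0 r z i a * of_real (x * c a + y * c' a)) =
      of_real (x * t i + y * t' i)"
    by (simp add: solves_column_def)
qed

lemma solves_column_iff_leibniz_terms:
  assumes "q \<le> \<nu>"
  shows "\<exists>A. (\<forall>l<q. degree (A l) \<le> l) \<and>
    (\<forall>c. solves_column \<nu> r q c t \<longleftrightarrow> (\<forall>l<q. leibniz_term \<nu> (block_poly r c) l = A l))"
proof -
  obtain A where deg_A: "\<forall>l<q. degree (A l) \<le> l" and A:
    "\<And>a. (\<forall>i<q. (\<Sum>l\<le>i. (pderiv ^^ l) (monom 1 i) * a l) = [:t i:]) \<longleftrightarrow> (\<forall>l<q. a l = A l)"
    using triangular_pderiv_system[of q t] by blast
  have "solves_column \<nu> r q c t \<longleftrightarrow>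
      (\<forall>i<q. (\<Sum>k<\<nu>. (pderiv ^^ k) (monom 1 i * block_poly r c k)) = [:t i:])" for c
    unfolding solves_column_def sum_M0_eq_poly
    using poly_map_poly_of_real_eq_const_iff by blast
  also have "\<dots> c \<longleftrightarrow> (\<forall>l<q. leibniz_term \<nu> (block_poly r c) l = A l)" for c
    using assms by (simp add: sum_higher_pderiv_monom_mult A)
  finally show ?thesis
    using deg_A by blast
qed

lemma column_solution_exists:
  assumes "q \<le> \<nu>" "q \<le> r" "0 < r"
  shows "\<exists>c. (\<forall>a\<ge>\<nu> * r. c a = 0) \<and> (\<forall>a. q * r \<le> a \<longrightarrow> a < \<nu> * r \<longrightarrow> c a = F a) \<and>
    solves_column \<nu> r q c t"
proof -
  obtain A where deg_A: "\<forall>l<q. degree (A l) \<le> l" and A: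
    "\<And>c. solves_column \<nu> r q c t \<longleftrightarrow> (\<forall>l<q. leibniz_term \<nu> (block_poly r c) l = A l)"
    using solves_column_iff_leibniz_terms[OF assms(1)] by blast
  have "degree (A l) < r" if "l < q" for l
    using deg_A that assms(2) by fastforce
  then obtain G where G_free: "\<forall>k\<ge>q. G k = block_poly r F k" and deg_G: "\<forall>k. degree (G k) < r"
    and G: "\<forall>l<q. leibniz_term \<nu> G l = A l"
    using leibniz_terms_surj[OF assms(1), of A r "block_poly r F"] degree_block_poly_less[OF assms(3)]
    by blast
  define c where "c a = (if a < \<nu> * r then coeff (G (a div r)) (a mod r) else 0)" for a
  have blocks: "block_poly r c k = G k" if "k < \<nu>" for k
  proof (rule poly_eqI)
    fix n
    show "coeff (block_poly r c k) n = coeff (G k) n"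
      using mult_add_less_mult[OF that, of n r] deg_G[rule_format, of k] assms(3)
      by (auto simp: coeff_block_poly c_def coeff_eq_0)
  qed
  have "leibniz_term \<nu> (block_poly r c) l = leibniz_term \<nu> G l" for l
    by (intro leibniz_term_cong blocks)
  then have "solves_column \<nu> r q c t"
    using A G by simp
  moreover have "c a = F a" if "q * r \<le> a" "a < \<nu> * r" for a
  proof -
    have "q \<le> a div r"
      using that(1) assms(3) div_less_iff_less_mult[of r a q] by linarith
    then show ?thesis
      using that(2) assms(3) G_free by (simp add: c_def coeff_block_poly)
  qed
  moreover have "c a = 0" if "\<nu> * r \<le> a" for a
    using that by (simp add: c_def)
  ultimately show ?thesis
    by blast
qed

lemma column_solution_unique:
  assumes "q \<le> \<nu>" "0 < r"
    and "\<forall>a\<ge>\<nu> * r. c a = 0" "\<forall>a\<ge>\<nu> * r. c' a = 0"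
    and "\<forall>a. q * r \<le> a \<longrightarrow> a < \<nu> * r \<longrightarrow> c a = c' a"
    and "solves_column \<nu> r q c t" "solves_column \<nu> r q c' t"
  shows "c = c'"
proof
  fix a
  obtain A where A:
    "\<And>c. solves_column \<nu> r q c t \<longleftrightarrow> (\<forall>l<q. leibniz_term \<nu> (block_poly r c) l = A l)"
    using solves_column_iff_leibniz_terms[OF assms(1)] by blast
  have free_blocks: "block_poly r c k = block_poly r c' k" if "q \<le> k" "k < \<nu>" for k
    unfolding block_poly_def
    using that assms(5) mult_add_less_mult[OF that(2)] by (intro sum.cong refl) (simp add: trans_le_add1)
  have "block_poly r c l = block_poly r c' l" if "l < q" for l
    using A assms(6,7) by (intro leibniz_terms_inj[OF assms(1) _ free_blocks that]) simp_all
  from this[of "a div r"] have "a < q * r \<Longrightarrow>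
      coeff (block_poly r c (a div r)) (a mod r) = coeff (block_poly r c' (a div r)) (a mod r)"
    using assms(2) by (simp add: less_mult_imp_div_less)
  then have "a < q * r \<Longrightarrow> c a = c' a"
    using assms(2) by (simp add: coeff_block_poly)
  then show "c a = c' a"
    using assms(3-5) by (cases "a < q * r"; cases "a < \<nu> * r") auto
qed

section \<open>The space of constant solutions\<close>

definition solution_matrices ::
    "nat \<Rightarrow> nat \<Rightarrow> nat \<Rightarrow> (nat \<Rightarrow> nat \<Rightarrow> real) \<Rightarrow> (nat \<Rightarrow> nat \<Rightarrow> real) set" where
  "solution_matrices \<nu> r q T = {C. (\<forall>a b. \<nu> * r \<le> a \<or> q \<le> b \<longrightarrow> C a b = 0) \<and>
     (\<forall>b<q. solves_column \<nu> r q (\<lambda>a. C a b) (\<lambda>i. T i b))}"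

lemma solution_matrices_lincomb:
  "C \<in> solution_matrices \<nu> r q T \<Longrightarrow> C' \<in> solution_matrices \<nu> r q T' \<Longrightarrow>
    (\<lambda>a b. x * C a b + y * C' a b) \<in> solution_matrices \<nu> r q (\<lambda>i b. x * T i b + y * T' i b)"
  by (simp add: solution_matrices_def solves_column_lincomb)

interpretation matrix_space: vector_space mscale
  by unfold_locales (simp_all add: mscale_def fun_eq_iff algebra_simps)

lemma subspace_solution_matrices_0: "matrix_space.subspace (solution_matrices \<nu> r q (\<lambda>_ _. 0))"
proof (rule matrix_space.subspaceI)
  show "0 \<in> solution_matrices \<nu> r q (\<lambda>_ _. 0)"
    by (simp add: solution_matrices_def solves_column_def)
next
  fix C C' assume "C \<in> solution_matrices \<nu> r q (\<lambda>_ _. 0)" "C' \<in> solution_matrices \<nu> r q (\<lambda>_ _. 0)"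
  from solution_matrices_lincomb[OF this, of 1 1] show "C + C' \<in> solution_matrices \<nu> r q (\<lambda>_ _. 0)"
    by (simp add: plus_fun_def)
next
  fix x C assume "C \<in> solution_matrices \<nu> r q (\<lambda>_ _. 0)"
  from solution_matrices_lincomb[OF this this, of x 0] show "mscale x C \<in> solution_matrices \<nu> r q (\<lambda>_ _. 0)"
    by (simp add: mscale_def)
qed

lemma solution_matrices_eq_translate:
  assumes "C0 \<in> solution_matrices \<nu> r q T"
  shows "solution_matrices \<nu> r q T = (\<lambda>v. C0 + v) ` solution_matrices \<nu> r q (\<lambda>_ _. 0)"
proof (intro equalityI subsetI)
  fix C assume "C \<in> solution_matrices \<nu> r q T"
  from solution_matrices_lincomb[OF this assms, of 1 "-1"]
  have "C - C0 \<in> solution_matrices \<nu> r q (\<lambda>_ _. 0)"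
    by (simp add: fun_diff_def)
  then show "C \<in> (\<lambda>v. C0 + v) ` solution_matrices \<nu> r q (\<lambda>_ _. 0)"
    by (intro image_eqI[of _ _ "C - C0"]) simp_all
next
  fix C assume "C \<in> (\<lambda>v. C0 + v) ` solution_matrices \<nu> r q (\<lambda>_ _. 0)"
  then obtain v where "v \<in> solution_matrices \<nu> r q (\<lambda>_ _. 0)" "C = C0 + v"
    by blast
  with solution_matrices_lincomb[OF assms this(1), of 1 1] show "C \<in> solution_matrices \<nu> r q T"
    by (simp add: plus_fun_def)
qed

lemma solution_matrix_exists:
  assumes "q \<le> \<nu>" "q \<le> r" "0 < r"
  shows "\<exists>C\<in>solution_matrices \<nu> r q T. \<forall>(a, b)\<in>{q * r..<\<nu> * r} \<times> {..<q}. C a b = F a b"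
proof -
  have "\<forall>b. \<exists>c. (\<forall>a\<ge>\<nu> * r. c a = 0) \<and> (\<forall>a. q * r \<le> a \<longrightarrow> a < \<nu> * r \<longrightarrow> c a = F a b) \<and>
      solves_column \<nu> r q c (\<lambda>i. T i b)"
    by (intro allI column_solution_exists[OF assms])
  then obtain col where col_zero: "\<And>a b. \<nu> * r \<le> a \<Longrightarrow> col b a = 0"
    and col_free: "\<And>a b. q * r \<le> a \<Longrightarrow> a < \<nu> * r \<Longrightarrow> col b a = F a b"
    and col_solves: "\<And>b. solves_column \<nu> r q (col b) (\<lambda>i. T i b)"
    by metis
  define C where "C a b = (if b < q then col b a else 0)" for a b
  have "(\<lambda>a. C a b) = col b" if "b < q" for b
    using that by (simp add: C_def)
  then have "C \<in> solution_matrices \<nu> r q T"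
    using col_zero col_solves by (simp add: solution_matrices_def C_def)
  moreover have "\<forall>(a, b)\<in>{q * r..<\<nu> * r} \<times> {..<q}. C a b = F a b"
    using col_free by (simp add: C_def)
  ultimately show ?thesis
    by blast
qed

lemma solution_matrix_unique:
  assumes "q \<le> \<nu>" "0 < r" "C \<in> solution_matrices \<nu> r q T" "C' \<in> solution_matrices \<nu> r q T"
    and "\<forall>(a, b)\<in>{q * r..<\<nu> * r} \<times> {..<q}. C a b = C' a b"
  shows "C = C'"
proof (intro ext)
  fix a b
  show "C a b = C' a b"
  proof (cases "b < q")
    case True
    have "(\<lambda>a. C a b) = (\<lambda>a. C' a b)"
      using assms True
      by (intro column_solution_unique[OF assms(1,2), of _ _ "\<lambda>i. T i b"]) (auto simp: solution_matrices_def)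
    then show ?thesis
      by metis
  next
    case False
    with assms(3,4) show ?thesis
      by (simp add: solution_matrices_def)
  qed
qed

lemma sum_mscale_apply: "(\<Sum>x\<in>A. mscale (u x) (f x)) a b = (\<Sum>x\<in>A. u x * f x a b)"
  by (induction A rule: infinite_finite_induct) (simp_all add: mscale_def)

lemma dim_eq_card_of_coordinates:
  fixes I :: "(nat \<times> nat) set"
  assumes "matrix_space.subspace H" "finite I"
    and onto: "\<And>F. \<exists>C\<in>H. \<forall>(a, b)\<in>I. C a b = F a b"
    and inj: "\<And>C. C \<in> H \<Longrightarrow> \<forall>(a, b)\<in>I. C a b = 0 \<Longrightarrow> C = 0"
  shows "matrix_space.dim H = card I"
proof -
  have "\<forall>x. \<exists>C. C \<in> H \<and> (\<forall>(a, b)\<in>I. C a b = (if (a, b) = x then 1 else 0))"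
  proof
    fix x
    show "\<exists>C. C \<in> H \<and> (\<forall>(a, b)\<in>I. C a b = (if (a, b) = x then 1 else 0))"
      using onto[of "\<lambda>a b. if (a, b) = x then 1 else 0"] by blast
  qed
  then obtain e where "\<forall>x. e x \<in> H \<and> (\<forall>(a, b)\<in>I. e x a b = (if (a, b) = x then 1 else 0))"
    by (rule exE[OF choice])
  then have e: "\<And>x. e x \<in> H"
    and e_coord: "\<And>x a b. (a, b) \<in> I \<Longrightarrow> e x a b = (if (a, b) = x then 1 else 0)"
    by blast+
  have coord: "(\<Sum>x\<in>I. mscale (u x) (e x)) a b = u (a, b)" if "(a, b) \<in> I" for u a b
  proof -
    have "(\<Sum>x\<in>I. mscale (u x) (e x)) a b = (\<Sum>x\<in>I. if (a, b) = x then u x else 0)"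
      using that by (simp add: sum_mscale_apply e_coord) (intro sum.cong; simp)
    then show ?thesis
      using that \<open>finite I\<close> by simp
  qed
  have inj_e: "inj_on e I"
  proof (rule inj_onI)
    fix x y assume "x \<in> I" "y \<in> I" "e x = e y"
    then show "x = y"
      using e_coord[of "fst x" "snd x" x] e_coord[of "fst x" "snd x" y] by (auto split: if_splits)
  qed
  have "matrix_space.independent (e ` I)"
  proof (rule matrix_space.independent_if_scalars_zero)
    fix f v assume sum0: "(\<Sum>v\<in>e ` I. mscale (f v) v) = 0" and "v \<in> e ` I"
    then obtain x where "x \<in> I" "v = e x"
      by blast
    have "(\<Sum>y\<in>I. mscale (f (e y)) (e y)) = 0"
      using sum0 by (simp add: sum.reindex[OF inj_e])
    then show "f v = 0"
      using coord[of "fst x" "snd x" "\<lambda>y. f (e y)"] \<open>x \<in> I\<close> \<open>v = e x\<close> by simp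
  qed (use \<open>finite I\<close> in simp)
  moreover have "H \<subseteq> matrix_space.span (e ` I)"
  proof
    fix C assume "C \<in> H"
    define C' where "C' = (\<Sum>x\<in>I. mscale (C (fst x) (snd x)) (e x))"
    have "C' \<in> matrix_space.span (e ` I)"
      unfolding C'_def by (intro matrix_space.span_sum matrix_space.span_scale matrix_space.span_base) simp
    moreover have "C - C' = 0"
      using coord \<open>C \<in> H\<close> e unfolding C'_def
      by (intro inj matrix_space.subspace_diff assms(1) matrix_space.subspace_sum matrix_space.subspace_scale) auto
    ultimately show "C \<in> matrix_space.span (e ` I)"
      by simp
  qed
  ultimately have "card (e ` I) = matrix_space.dim H"
    using e by (intro matrix_space.basis_card_eq_dim) auto
  then show ?thesis
    by (simp add: card_image[OF inj_e])
qed

theorem proposition7p5: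
  fixes q r \<nu> :: nat
  assumes "0 < q" and "q < \<nu>" and "\<nu> \<le> r"
  defines "S \<equiv> {C :: nat \<Rightarrow> nat \<Rightarrow> real.
             (\<forall>a b. (\<nu> * r \<le> a \<or> q \<le> b) \<longrightarrow> C a b = 0) \<and>
             (\<forall>z :: complex. \<forall>i<q. \<forall>b<q.
                (\<Sum>a<\<nu> * r. M0 r z i a * complex_of_real (C a b)) = (if i = b then 1 else 0))}"
  shows "S \<noteq> {} \<and>
         (\<exists>C0 V. module.subspace mscale V \<and> vector_space.dim mscale V = (\<nu> - q) * r * q \<and>
                 S = (\<lambda>v. C0 + v) ` V)"
proof -
  have dims: "q \<le> \<nu>" "q \<le> r" "0 < r"
    using assms(1-3) by simp_all
  let ?H = "solution_matrices \<nu> r q (\<lambda>_ _. 0)"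
  have S_eq: "S = solution_matrices \<nu> r q (\<lambda>i b. if i = b then 1 else 0)"
    unfolding S_def solution_matrices_def solves_column_def by (auto simp: if_distrib)
  then obtain C0 where "C0 \<in> S"
    using solution_matrix_exists[OF dims] by blast
  have "matrix_space.dim ?H = card ({q * r..<\<nu> * r} \<times> {..<q})"
    using solution_matrix_exists[OF dims]
      solution_matrix_unique[OF dims(1,3) _ matrix_space.subspace_0[OF subspace_solution_matrices_0]]
    by (intro dim_eq_card_of_coordinates subspace_solution_matrices_0) auto
  also have "\<dots> = (\<nu> - q) * r * q"
    by (simp add: diff_mult_distrib)
  finally show ?thesis
    using \<open>C0 \<in> S\<close> S_eq solution_matrices_eq_translate subspace_solution_matrices_0 by blast
qed

end
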